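(* Assume $a+b\le1$. Let $v_1,\dots,v_k\in\mathsf V$ and $r_1,\dots,r_k,s_1,\dots,s_k\in\{0,1,\dots\}$. Then $$\mathbf E\big[\sigma(v_1)^{r_1+s_1}\cdots\sigma(v_k)^{r_k+s_k}\big]\ge\mathbf E\big[\sigma(v_1)^{r_1}\cdots\sigma(v_k)^{r_k}\big]\,\mathbf E\big[\sigma(v_1)^{s_1}\cdots\sigma(v_k)^{s_k}\big].$$
   Context: Let $M$ be a compact orientable surface without boundary, or the plane. Let $\mathsf G=(\mathsf V,\mathsf E)$ be a finite connected graph embedded in $M$ with all faces topological discs, and $\mathsf G^*=(\mathsf U,\mathsf E^* )$ its embedded dual ($\mathsf U$ = faces of $\mathsf G$); $e^*$ is the dual edge crossing $e$, $\xi^*=\{e^*:e\in\xi\}$. Fix integers $q,q'\ge1$, finite $Q\subset\mathbb R$, $Q'\subset\mathbb C$ with $Q=-Q$, $Q'=-Q'$, $|Q|=q$, $|Q'|=q'$, and $a,b\in(0,1]$. For $\sigma:\mathsf V\to Q$, $\eta(\sigma)\subseteq\mathsf E^*$ is the set of $e^*$ whose primal $e$ has endpoints with different $\sigma$-values; for $\sigma':\mathsf U\to Q'$, $\eta(\sigma')\subseteq\mathsf E$ is the set of $e$ whose dual $e^*$ has endpoints with different $\sigma'$-values. $\mathbf P(\sigma,\sigma')\propto a^{|\eta(\sigma')|}b^{|\eta(\sigma)|}$ on $\Sigma=\{(\sigma,\sigma'):\eta(\sigma)^*\cap\eta(\sigma')=\emptyset\}$, and $\mathbf E$ is expectation under $\mathbf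 P$. *)

theory Defs
  imports Complex_Main "HOL-Library.FuncSet" "HOL-Combinatorics.Permutations"
begin

text \<open>
  A finite connected graph cellularly embedded in a compact orientable surface is encoded
  (Heffter--Edmonds) by a combinatorial map: a finite set of darts D (half-edges), a
  fixed-point-free involution alpha on D (the two darts of an edge) and a permutation rho
  of D (cyclic order of darts around each vertex, given by the orientation).
  Vertices = orbits of rho, edges = orbits of alpha, faces = orbits of rho o alpha.
  The group generated by alpha and rho acts transitively (connectedness).
\<close>

definition orb :: "('d \<Rightarrow> 'd) \<Rightarrow> 'd \<Rightarrow> 'd set" where
  "orb f x = {(f ^^ n) x | n. True}"

definition comb_map :: "'d set \<Rightarrow> ('d \<Rightarrow> 'd) \<Rightarrow> ('d \<Rightarrow> 'd) \<Rightarrow> bool" where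
  "comb_map D alpha rho \<longleftrightarrow>
     finite D \<and> D \<noteq> {} \<and> alpha permutes D \<and> rho permutes D \<and>
     (\<forall>d\<in>D. alpha d \<noteq> d \<and> alpha (alpha d) = d) \<and>
     (\<forall>d\<in>D. \<forall>d'\<in>D. (d, d') \<in> ({(x, alpha x) | x. x \<in> D} \<union> {(x, rho x) | x. x \<in> D})\<^sup>*)"

definition vtx :: "('d \<Rightarrow> 'd) \<Rightarrow> 'd \<Rightarrow> 'd set" where
  "vtx rho d = orb rho d"

definition fce :: "('d \<Rightarrow> 'd) \<Rightarrow> ('d \<Rightarrow> 'd) \<Rightarrow> 'd \<Rightarrow> 'd set" where
  "fce alpha rho d = orb (rho \<circ> alpha) d"

definition verts :: "'d set \<Rightarrow> ('d \<Rightarrow> 'd) \<Rightarrow> 'd set set" where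
  "verts D rho = vtx rho ` D"

definition faces :: "'d set \<Rightarrow> ('d \<Rightarrow> 'd) \<Rightarrow> ('d \<Rightarrow> 'd) \<Rightarrow> 'd set set" where
  "faces D alpha rho = fce alpha rho ` D"

definition edges :: "'d set \<Rightarrow> ('d \<Rightarrow> 'd) \<Rightarrow> 'd set set" where
  "edges D alpha = (\<lambda>d. {d, alpha d}) ` D"

text \<open>eta(sigma): (duals of) edges whose primal endpoints carry different spins;
  identified with the set of the corresponding primal edges.\<close>
definition eta_primal :: "'d set \<Rightarrow> ('d \<Rightarrow> 'd) \<Rightarrow> ('d \<Rightarrow> 'd) \<Rightarrow> ('d set \<Rightarrow> real) \<Rightarrow> 'd set set" where
  "eta_primal D alpha rho \<sigma> =
     {e \<in> edges D alpha. \<exists>d\<in>D. e = {d, alpha d} \<and> \<sigma> (vtx rho d) \<noteq> \<sigma> (vtx rho (alpha d))}"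

definition eta_dual :: "'d set \<Rightarrow> ('d \<Rightarrow> 'd) \<Rightarrow> ('d \<Rightarrow> 'd) \<Rightarrow> ('d set \<Rightarrow> complex) \<Rightarrow> 'd set set" where
  "eta_dual D alpha rho \<sigma>' =
     {e \<in> edges D alpha. \<exists>d\<in>D. e = {d, alpha d} \<and> \<sigma>' (fce alpha rho d) \<noteq> \<sigma>' (fce alpha rho (alpha d))}"

definition configs :: "'d set \<Rightarrow> ('d \<Rightarrow> 'd) \<Rightarrow> ('d \<Rightarrow> 'd) \<Rightarrow> real set \<Rightarrow> complex set
    \<Rightarrow> (('d set \<Rightarrow> real) \<times> ('d set \<Rightarrow> complex)) set" where
  "configs D alpha rho Q Q' =
     {(\<sigma>, \<sigma>'). \<sigma> \<in> verts D rho \<rightarrow>\<^sub>E Q \<and> \<sigma>' \<in> faces D alpha rho \<rightarrow>\<^sub>E Q' \<and>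
               eta_primal D alpha rho \<sigma> \<inter> eta_dual D alpha rho \<sigma>' = {}}"

definition weight :: "'d set \<Rightarrow> ('d \<Rightarrow> 'd) \<Rightarrow> ('d \<Rightarrow> 'd) \<Rightarrow> real \<Rightarrow> real
    \<Rightarrow> ('d set \<Rightarrow> real) \<times> ('d set \<Rightarrow> complex) \<Rightarrow> real" where
  "weight D alpha rho a b c =
     a ^ card (eta_dual D alpha rho (snd c)) * b ^ card (eta_primal D alpha rho (fst c))"

definition expect :: "'d set \<Rightarrow> ('d \<Rightarrow> 'd) \<Rightarrow> ('d \<Rightarrow> 'd) \<Rightarrow> real set \<Rightarrow> complex set
    \<Rightarrow> real \<Rightarrow> real \<Rightarrow> (('d set \<Rightarrow> real) \<times> ('d set \<Rightarrow> complex) \<Rightarrow> real) \<Rightarrow> real" where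
  "expect D alpha rho Q Q' a b f =
     (\<Sum>c\<in>configs D alpha rho Q Q'. weight D alpha rho a b c * f c) /
     (\<Sum>c\<in>configs D alpha rho Q Q'. weight D alpha rho a b c)"

end

theory Submission
  imports Defs
begin

text \<open>Each edge weight splits into three edge states, as in the Edwards--Sokal coupling: the edge
  forces the primal spins across it to agree (weight \<open>a\<close>), both the primal and the dual spins
  (weight \<open>1 - a - b \<ge> 0\<close>), or the dual spins (weight \<open>b\<close>). Summing out the spins turns the
  partition function into a sum over pairs \<open>\<zeta> \<subseteq> \<omega> \<subseteq> E\<close> with a log-supermodular weight, because the
  number of clusters of a graph is a supermodular function of its edge set. The monomial
  \<open>\<sigma>(v\<^sub>1)\<^bsup>m\<^sub>1\<^esup> \<cdots> \<sigma>(v\<^sub>k)\<^bsup>m\<^sub>k\<^esup>\<close> becomes a product, over the clusters of \<open>\<omega>\<close>, of moments of the uniform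
  distribution on \<open>Q\<close>; as \<open>Q\<close> is symmetric these moments are nonnegative and supermultiplicative,
  so the product increases with \<open>\<omega>\<close> and is supermultiplicative in the exponents. The FKG inequality
  finishes the proof.\<close>

section \<open>The four functions theorem\<close>

lemma ahlswede_daykin_two_point:
  fixes a0 a1 b0 b1 c0 c1 d0 d1 :: real
  assumes nonneg: "0 \<le> a0" "0 \<le> a1" "0 \<le> b0" "0 \<le> b1" "0 \<le> c0" "0 \<le> c1" "0 \<le> d0" "0 \<le> d1"
    and h00: "a0 * b0 \<le> c0 * d0" and h01: "a0 * b1 \<le> c1 * d0"
    and h10: "a1 * b0 \<le> c1 * d0" and h11: "a1 * b1 \<le> c1 * d1"
  shows "(a0 + a1) * (b0 + b1) \<le> (c0 + c1) * (d0 + d1)"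
proof -
  have cross_prod: "(a0 * b1) * (a1 * b0) \<le> (c1 * d0) * (c0 * d1)"
  proof -
    have "(a0 * b1) * (a1 * b0) = (a0 * b0) * (a1 * b1)" by simp
    also have "\<dots> \<le> (c0 * d0) * (c1 * d1)"
      using mult_mono[OF h00 h11] nonneg by simp
    finally show ?thesis by (simp add: mult_ac)
  qed
  \<comment> \<open>With \<open>u, v \<le> s\<close> and \<open>u v \<le> s t\<close>, the product \<open>(s - u) (s - v) \<ge> 0\<close> gives \<open>s (u + v) \<le> s (s + t)\<close>.\<close>
  have cross_sum: "a0 * b1 + a1 * b0 \<le> c1 * d0 + c0 * d1"
  proof (cases "c1 * d0 = 0")
    case True
    then show ?thesis using h01 h10 mult_nonneg_nonneg[OF nonneg(5,8)] by linarith
  next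
    case False
    then have pos: "0 < c1 * d0" using nonneg by (simp add: less_le)
    have "0 \<le> (c1 * d0 - a0 * b1) * (c1 * d0 - a1 * b0)" using assms by simp
    then have "c1 * d0 * (a0 * b1 + a1 * b0) \<le> c1 * d0 * (c1 * d0) + (a0 * b1) * (a1 * b0)"
      by (simp add: algebra_simps)
    also have "\<dots> \<le> c1 * d0 * (c1 * d0 + c0 * d1)"
      using cross_prod by (simp add: algebra_simps)
    finally show ?thesis using pos by (simp only: mult_le_cancel_left_pos)
  qed
  show ?thesis using assms cross_sum by (simp add: algebra_simps)
qed

lemma sum_Pow_insert:
  assumes "finite X" "x \<notin> X"
  shows "(\<Sum>A\<in>Pow (insert x X). h A) = (\<Sum>A\<in>Pow X. h A + h (insert x A))"
proof -
  have "inj_on (insert x) (Pow X)"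
    using assms(2) by (intro inj_onI) (metis Diff_insert_absorb PowD subsetD)
  moreover have "Pow X \<inter> insert x ` Pow X = {}" using assms(2) by blast
  ultimately show ?thesis
    unfolding Pow_insert using assms(1)
    by (simp add: sum.union_disjoint sum.reindex sum.distrib)
qed

theorem ahlswede_daykin:
  fixes f1 f2 f3 f4 :: "'a set \<Rightarrow> real"
  assumes "finite X"
    and "\<And>A. A \<subseteq> X \<Longrightarrow> 0 \<le> f1 A" "\<And>A. A \<subseteq> X \<Longrightarrow> 0 \<le> f2 A"
    and "\<And>A. A \<subseteq> X \<Longrightarrow> 0 \<le> f3 A" "\<And>A. A \<subseteq> X \<Longrightarrow> 0 \<le> f4 A"
    and "\<And>A B. A \<subseteq> X \<Longrightarrow> B \<subseteq> X \<Longrightarrow> f1 A * f2 B \<le> f3 (A \<union> B) * f4 (A \<inter> B)"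
  shows "(\<Sum>A\<in>Pow X. f1 A) * (\<Sum>A\<in>Pow X. f2 A) \<le> (\<Sum>A\<in>Pow X. f3 A) * (\<Sum>A\<in>Pow X. f4 A)"
  using assms
proof (induction X arbitrary: f1 f2 f3 f4 rule: finite_induct)
  case empty
  then show ?case by simp
next
  case (insert x X)
  let ?g = "\<lambda>f A. f A + f (insert x A)"
  have "(\<Sum>A\<in>Pow X. ?g f1 A) * (\<Sum>A\<in>Pow X. ?g f2 A) \<le> (\<Sum>A\<in>Pow X. ?g f3 A) * (\<Sum>A\<in>Pow X. ?g f4 A)"
  proof (rule insert.IH)
    fix A assume "A \<subseteq> X"
    then have "A \<subseteq> insert x X" "insert x A \<subseteq> insert x X" by auto
    then show "0 \<le> ?g f1 A" "0 \<le> ?g f2 A" "0 \<le> ?g f3 A" "0 \<le> ?g f4 A"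
      using insert.prems(1-4) by (auto intro: add_nonneg_nonneg)
  next
    fix A B assume AB: "A \<subseteq> X" "B \<subseteq> X"
    then have "x \<notin> A" "x \<notin> B" using insert.hyps by auto
    then have unions: "A \<union> insert x B = insert x (A \<union> B)" "insert x A \<union> B = insert x (A \<union> B)"
      "insert x A \<union> insert x B = insert x (A \<union> B)"
      and inters: "A \<inter> insert x B = A \<inter> B" "insert x A \<inter> B = A \<inter> B"
      "insert x A \<inter> insert x B = insert x (A \<inter> B)"
      by auto
    have sub: "C \<subseteq> insert x X" "insert x C \<subseteq> insert x X" if "C \<subseteq> X" for C
      using that by auto
    show "?g f1 A * ?g f2 B \<le> ?g f3 (A \<union> B) * ?g f4 (A \<inter> B)"
    proof (rule ahlswede_daykin_two_point)
      show "f1 A * f2 B \<le> f3 (A \<union> B) * f4 (A \<inter> B)"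
        using insert.prems(5)[OF sub(1)[OF AB(1)] sub(1)[OF AB(2)]] .
      show "f1 A * f2 (insert x B) \<le> f3 (insert x (A \<union> B)) * f4 (A \<inter> B)"
        using insert.prems(5)[OF sub(1)[OF AB(1)] sub(2)[OF AB(2)]] unions inters by simp
      show "f1 (insert x A) * f2 B \<le> f3 (insert x (A \<union> B)) * f4 (A \<inter> B)"
        using insert.prems(5)[OF sub(2)[OF AB(1)] sub(1)[OF AB(2)]] unions inters by simp
      show "f1 (insert x A) * f2 (insert x B) \<le> f3 (insert x (A \<union> B)) * f4 (insert x (A \<inter> B))"
        using insert.prems(5)[OF sub(2)[OF AB(1)] sub(2)[OF AB(2)]] unions inters by simp
    qed (use AB in \<open>auto intro: insert.prems(1-4) sub\<close>)
  qed
  then show ?case by (simp only: sum_Pow_insert[OF insert.hyps])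
qed

theorem fkg_inequality:
  fixes \<mu> F G :: "'a set \<Rightarrow> real"
  assumes "finite X"
    and \<mu>_nonneg: "\<And>A. A \<subseteq> X \<Longrightarrow> 0 \<le> \<mu> A"
    and F_nonneg: "\<And>A. A \<subseteq> X \<Longrightarrow> 0 \<le> F A" and G_nonneg: "\<And>A. A \<subseteq> X \<Longrightarrow> 0 \<le> G A"
    and log_supermodular: "\<And>A B. A \<subseteq> X \<Longrightarrow> B \<subseteq> X \<Longrightarrow> \<mu> A * \<mu> B \<le> \<mu> (A \<union> B) * \<mu> (A \<inter> B)"
    and F_mono: "\<And>A B. A \<subseteq> B \<Longrightarrow> B \<subseteq> X \<Longrightarrow> F A \<le> F B"
    and G_mono: "\<And>A B. A \<subseteq> B \<Longrightarrow> B \<subseteq> X \<Longrightarrow> G A \<le> G B"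
  shows "(\<Sum>A\<in>Pow X. \<mu> A * F A) * (\<Sum>A\<in>Pow X. \<mu> A * G A)
     \<le> (\<Sum>A\<in>Pow X. \<mu> A * (F A * G A)) * (\<Sum>A\<in>Pow X. \<mu> A)"
proof (rule ahlswede_daykin[OF assms(1)])
  fix A B assume AB: "A \<subseteq> X" "B \<subseteq> X"
  have "(\<mu> A * \<mu> B) * (F A * G B) \<le> (\<mu> (A \<union> B) * \<mu> (A \<inter> B)) * (F (A \<union> B) * G (A \<union> B))"
    using AB by (intro mult_mono log_supermodular F_mono G_mono mult_nonneg_nonneg \<mu>_nonneg F_nonneg G_nonneg) auto
  then show "\<mu> A * F A * (\<mu> B * G B) \<le> \<mu> (A \<union> B) * (F (A \<union> B) * G (A \<union> B)) * \<mu> (A \<inter> B)"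
    by (simp add: algebra_simps)
qed (use assms(2-4) in auto)

section \<open>Clusters of an edge set\<close>

definition link_rel :: "'e set \<Rightarrow> ('e \<Rightarrow> 'v) \<Rightarrow> ('e \<Rightarrow> 'v) \<Rightarrow> ('v \<times> 'v) set" where
  "link_rel W p q = (\<lambda>e. (p e, q e)) ` W \<union> (\<lambda>e. (q e, p e)) ` W"

definition cluster :: "'e set \<Rightarrow> ('e \<Rightarrow> 'v) \<Rightarrow> ('e \<Rightarrow> 'v) \<Rightarrow> 'v \<Rightarrow> 'v set" where
  "cluster W p q u = (link_rel W p q)\<^sup>* `` {u}"

definition clusters :: "'v set \<Rightarrow> 'e set \<Rightarrow> ('e \<Rightarrow> 'v) \<Rightarrow> ('e \<Rightarrow> 'v) \<Rightarrow> 'v set set" where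
  "clusters V W p q = cluster W p q ` V"

definition edge_constant :: "'v set \<Rightarrow> 'a set \<Rightarrow> 'e set \<Rightarrow> ('e \<Rightarrow> 'v) \<Rightarrow> ('e \<Rightarrow> 'v) \<Rightarrow> ('v \<Rightarrow> 'a) set" where
  "edge_constant V Q W p q = {\<sigma> \<in> V \<rightarrow>\<^sub>E Q. \<forall>e\<in>W. \<sigma> (p e) = \<sigma> (q e)}"

lemma sym_link_rel_rtrancl: "sym ((link_rel W p q)\<^sup>*)"
  unfolding link_rel_def by (intro sym_rtrancl symI) blast

lemma link_rel_insert: "link_rel (insert e W) p q = insert (p e, q e) (insert (q e, p e) (link_rel W p q))"
  unfolding link_rel_def by blast

lemma cluster_self: "u \<in> cluster W p q u"
  unfolding cluster_def by simp

lemma mem_cluster_sym: "v \<in> cluster W p q u \<longleftrightarrow> u \<in> cluster W p q v"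
  using symD[OF sym_link_rel_rtrancl] unfolding cluster_def by auto

lemma cluster_eq_iff: "cluster W p q v = cluster W p q u \<longleftrightarrow> v \<in> cluster W p q u"
proof
  assume "v \<in> cluster W p q u"
  then have uv: "(u, v) \<in> (link_rel W p q)\<^sup>*" and vu: "(v, u) \<in> (link_rel W p q)\<^sup>*"
    using mem_cluster_sym unfolding cluster_def by fastforce+
  show "cluster W p q v = cluster W p q u"
    unfolding cluster_def using rtrancl_trans[OF uv] rtrancl_trans[OF vu] by auto
next
  assume "cluster W p q v = cluster W p q u"
  then show "v \<in> cluster W p q u" using cluster_self[of v W p q] by simp
qed

lemma cluster_endpoints_eq:
  assumes "e \<in> W"
  shows "cluster W p q (q e) = cluster W p q (p e)"
proof -
  have "(p e, q e) \<in> link_rel W p q" using assms unfolding link_rel_def by auto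
  then have "q e \<in> cluster W p q (p e)" unfolding cluster_def by auto
  then show ?thesis by (simp add: cluster_eq_iff)
qed

lemma cluster_mono: "W \<subseteq> W' \<Longrightarrow> cluster W p q u \<subseteq> cluster W' p q u"
  unfolding cluster_def link_rel_def by (meson Image_mono image_mono order_refl rtrancl_mono sup_mono)

lemma edge_constant_cluster:
  assumes "\<sigma> \<in> edge_constant V Q W p q" "v \<in> cluster W p q u"
  shows "\<sigma> v = \<sigma> u"
proof -
  have "(u, v) \<in> (link_rel W p q)\<^sup>*" using assms(2) unfolding cluster_def by simp
  then show ?thesis
  proof (induction rule: rtrancl_induct)
    case (step y z)
    have "\<forall>e\<in>W. \<sigma> (p e) = \<sigma> (q e)" using assms(1) unfolding edge_constant_def by simp
    with step.hyps(2) have "\<sigma> z = \<sigma> y" unfolding link_rel_def by auto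
    with step.IH show ?case by simp
  qed simp
qed

lemma cluster_insert:
  fixes W :: "'e set" and p q :: "'e \<Rightarrow> 'v" and e :: 'e
  defines "Cp \<equiv> cluster W p q (p e)" and "Cq \<equiv> cluster W p q (q e)"
  shows "cluster (insert e W) p q u = (if u \<in> Cp \<union> Cq then Cp \<union> Cq else cluster W p q u)"
proof -
  have "cluster (insert e W) p q u = cluster W p q u \<union> (if u \<in> Cp \<union> Cq then Cp \<union> Cq else {})"
    using sym_link_rel_rtrancl[of W p q] unfolding Cp_def Cq_def cluster_def link_rel_insert rtrancl_insert
    by (auto simp: sym_def)
  moreover have "cluster W p q u \<subseteq> Cp \<union> Cq" if "u \<in> Cp \<union> Cq"
    using that cluster_eq_iff[of W p q u "p e"] cluster_eq_iff[of W p q u "q e"]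
    unfolding Cp_def Cq_def by auto
  ultimately show ?thesis by auto
qed

lemma clusters_insert:
  fixes W :: "'e set" and p q :: "'e \<Rightarrow> 'v" and e :: 'e
  assumes "p e \<in> V" "q e \<in> V"
  defines "Cp \<equiv> cluster W p q (p e)" and "Cq \<equiv> cluster W p q (q e)"
  shows "clusters V (insert e W) p q = insert (Cp \<union> Cq) (clusters V W p q - {Cp, Cq})"
proof (intro equalityI subsetI)
  fix C assume "C \<in> clusters V (insert e W) p q"
  then obtain u where "u \<in> V" "C = cluster (insert e W) p q u" unfolding clusters_def by auto
  moreover have "cluster W p q u \<notin> {Cp, Cq}" if "u \<notin> Cp \<union> Cq"
    using that cluster_self[of u W p q] by auto
  ultimately show "C \<in> insert (Cp \<union> Cq) (clusters V W p q - {Cp, Cq})"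
    unfolding cluster_insert Cp_def Cq_def clusters_def by auto
next
  fix C assume C: "C \<in> insert (Cp \<union> Cq) (clusters V W p q - {Cp, Cq})"
  show "C \<in> clusters V (insert e W) p q"
  proof (cases "C = Cp \<union> Cq")
    case True
    then have "C = cluster (insert e W) p q (p e)"
      unfolding cluster_insert Cp_def Cq_def using cluster_self[of "p e" W p q] by auto
    then show ?thesis using assms(1) unfolding clusters_def by blast
  next
    case False
    then obtain u where u: "u \<in> V" "C = cluster W p q u" "C \<noteq> Cp" "C \<noteq> Cq"
      using C unfolding clusters_def by auto
    then have "u \<notin> Cp \<union> Cq"
      using cluster_eq_iff[of W p q u "p e"] cluster_eq_iff[of W p q u "q e"] unfolding Cp_def Cq_def by auto
    then have "C = cluster (insert e W) p q u"
      unfolding cluster_insert Cp_def Cq_def u(2) by simp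
    then show ?thesis using u(1) unfolding clusters_def by blast
  qed
qed

lemma finite_clusters: "finite V \<Longrightarrow> finite (clusters V W p q)"
  unfolding clusters_def by simp

text \<open>The pair of endpoint clusters has two elements exactly when the new edge merges two clusters.\<close>
lemma card_clusters_insert:
  assumes "finite V" "p e \<in> V" "q e \<in> V"
  shows "card (clusters V (insert e W) p q) + card {cluster W p q (p e), cluster W p q (q e)}
       = card (clusters V W p q) + 1"
proof -
  let ?Cp = "cluster W p q (p e)" and ?Cq = "cluster W p q (q e)"
  have sub: "{?Cp, ?Cq} \<subseteq> clusters V W p q" using assms(2,3) unfolding clusters_def by auto
  have merged_new: "?Cp \<union> ?Cq \<notin> clusters V W p q - {?Cp, ?Cq}"
  proof
    assume "?Cp \<union> ?Cq \<in> clusters V W p q - {?Cp, ?Cq}"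
    then obtain u where "?Cp \<union> ?Cq = cluster W p q u" "?Cp \<union> ?Cq \<noteq> ?Cp" unfolding clusters_def by auto
    moreover from this have "?Cp = cluster W p q u"
      using cluster_eq_iff[of W p q "p e" u] cluster_self[of "p e" W p q] by auto
    ultimately show False by simp
  qed
  then have "card (clusters V (insert e W) p q) = card (clusters V W p q - {?Cp, ?Cq}) + 1"
    unfolding clusters_insert[where V=V and W=W and e=e and p=p and q=q, OF assms(2,3)]
    using finite_clusters[OF assms(1), of W p q] merged_new by (simp add: card_insert_disjoint)
  also have "\<dots> = card (clusters V W p q) - card {?Cp, ?Cq} + 1"
    using sub by (simp add: card_Diff_subset)
  finally show ?thesis
    using card_mono[OF finite_clusters[OF assms(1)] sub] by simp
qed

lemma card_endpoint_clusters_antimono: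
  assumes "W \<subseteq> W'"
  shows "card {cluster W' p q (p e), cluster W' p q (q e)} \<le> card {cluster W p q (p e), cluster W p q (q e)}"
proof (cases "cluster W p q (p e) = cluster W p q (q e)")
  case True
  then have "q e \<in> cluster W' p q (p e)"
    using True cluster_self[of "q e" W p q] cluster_mono[OF assms, of p q "p e"] by auto
  then show ?thesis using cluster_eq_iff[of W' p q "q e" "p e"] by (simp add: card_insert_if)
qed (simp add: card_insert_if)

lemma card_clusters_diminishing_returns:
  assumes "finite V" "X \<subseteq> Y" "finite B" "\<forall>e\<in>B. p e \<in> V \<and> q e \<in> V"
  shows "card (clusters V (X \<union> B) p q) + card (clusters V Y p q)
       \<le> card (clusters V (Y \<union> B) p q) + card (clusters V X p q)"
  using assms(3,4)
proof (induction B rule: finite_induct)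
  case (insert e B)
  then have e: "p e \<in> V" "q e \<in> V" and IH: "card (clusters V (X \<union> B) p q) + card (clusters V Y p q)
       \<le> card (clusters V (Y \<union> B) p q) + card (clusters V X p q)" by auto
  have "X \<union> B \<subseteq> Y \<union> B" using assms(2) by auto
  then show ?case
    using IH card_clusters_insert[where W="X \<union> B" and e=e and p=p and q=q, OF assms(1) e]
      card_clusters_insert[where W="Y \<union> B" and e=e and p=p and q=q, OF assms(1) e]
      card_endpoint_clusters_antimono[of "X \<union> B" "Y \<union> B" p q e]
    by simp
qed simp

lemma card_clusters_supermodular:
  assumes "finite V" "finite B" "\<forall>e\<in>B. p e \<in> V \<and> q e \<in> V"
  shows "card (clusters V A p q) + card (clusters V B p q)
       \<le> card (clusters V (A \<union> B) p q) + card (clusters V (A \<inter> B) p q)"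
  using card_clusters_diminishing_returns[OF assms(1) _ assms(2,3), of "A \<inter> B" A]
  by (simp add: Int_absorb1 Un_absorb1 sup_commute)

lemma cluster_some_member:
  assumes "C \<in> clusters V W p q"
  shows "(SOME u. u \<in> V \<and> u \<in> C) \<in> V" "cluster W p q (SOME u. u \<in> V \<and> u \<in> C) = C"
proof -
  obtain w where "w \<in> V" "C = cluster W p q w" using assms unfolding clusters_def by auto
  then have "\<exists>u. u \<in> V \<and> u \<in> C" using cluster_self[of w W p q] by auto
  from someI_ex[OF this] have "(SOME u. u \<in> V \<and> u \<in> C) \<in> V" "(SOME u. u \<in> V \<and> u \<in> C) \<in> C"
    by auto
  then show "(SOME u. u \<in> V \<and> u \<in> C) \<in> V" "cluster W p q (SOME u. u \<in> V \<and> u \<in> C) = C"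
    using \<open>C = cluster W p q w\<close> by (simp_all add: cluster_eq_iff)
qed

lemma bij_betw_clusters_edge_constant:
  assumes "\<forall>e\<in>W. p e \<in> V \<and> q e \<in> V"
  shows "bij_betw (\<lambda>\<tau>. \<lambda>u\<in>V. \<tau> (cluster W p q u)) (clusters V W p q \<rightarrow>\<^sub>E Q) (edge_constant V Q W p q)"
proof (rule bij_betw_byWitness[where f' = "\<lambda>\<sigma>. \<lambda>C\<in>clusters V W p q. \<sigma> (SOME u. u \<in> V \<and> u \<in> C)"])
  show "\<forall>\<tau>\<in>clusters V W p q \<rightarrow>\<^sub>E Q.
      (\<lambda>C\<in>clusters V W p q. (\<lambda>u\<in>V. \<tau> (cluster W p q u)) (SOME u. u \<in> V \<and> u \<in> C)) = \<tau>"
  proof (intro ballI ext)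
    fix \<tau> C assume \<tau>: "\<tau> \<in> clusters V W p q \<rightarrow>\<^sub>E Q"
    show "(\<lambda>C\<in>clusters V W p q. (\<lambda>u\<in>V. \<tau> (cluster W p q u)) (SOME u. u \<in> V \<and> u \<in> C)) C = \<tau> C"
    proof (cases "C \<in> clusters V W p q")
      case True
      then show ?thesis using cluster_some_member[OF True] by simp
    next
      case False
      then show ?thesis using PiE_arb[OF \<tau> False] by simp
    qed
  qed
  show "\<forall>\<sigma>\<in>edge_constant V Q W p q.
      (\<lambda>u\<in>V. (\<lambda>C\<in>clusters V W p q. \<sigma> (SOME u. u \<in> V \<and> u \<in> C)) (cluster W p q u)) = \<sigma>"
  proof (intro ballI ext)
    fix \<sigma> u assume \<sigma>: "\<sigma> \<in> edge_constant V Q W p q"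
    show "(\<lambda>u\<in>V. (\<lambda>C\<in>clusters V W p q. \<sigma> (SOME u. u \<in> V \<and> u \<in> C)) (cluster W p q u)) u = \<sigma> u"
    proof (cases "u \<in> V")
      case True
      then have "\<exists>w. w \<in> V \<and> w \<in> cluster W p q u" using cluster_self[of u W p q] by auto
      then have "(SOME w. w \<in> V \<and> w \<in> cluster W p q u) \<in> cluster W p q u"
        by (rule someI2_ex) simp
      then show ?thesis using True edge_constant_cluster[OF \<sigma>] unfolding clusters_def by simp
    next
      case False
      moreover have "\<sigma> \<in> V \<rightarrow>\<^sub>E Q" using \<sigma> unfolding edge_constant_def by simp
      ultimately show ?thesis using PiE_arb[of \<sigma> V "\<lambda>_. Q" u] by simp
    qed
  qed
  show "(\<lambda>\<tau>. \<lambda>u\<in>V. \<tau> (cluster W p q u)) ` (clusters V W p q \<rightarrow>\<^sub>E Q) \<subseteq> edge_constant V Q W p q"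
    using assms unfolding edge_constant_def clusters_def by (auto simp: restrict_PiE_iff cluster_endpoints_eq)
  show "(\<lambda>\<sigma>. \<lambda>C\<in>clusters V W p q. \<sigma> (SOME u. u \<in> V \<and> u \<in> C)) ` edge_constant V Q W p q
      \<subseteq> clusters V W p q \<rightarrow>\<^sub>E Q"
    using cluster_some_member(1)[of _ V W p q] unfolding edge_constant_def by (auto simp: restrict_PiE_iff)
qed

lemma card_edge_constant:
  assumes "finite V" "\<forall>e\<in>W. p e \<in> V \<and> q e \<in> V"
  shows "card (edge_constant V Q W p q) = card Q ^ card (clusters V W p q)"
  using bij_betw_same_card[OF bij_betw_clusters_edge_constant[where Q=Q, OF assms(2)]]
    finite_clusters[OF assms(1), of W p q]
  by (simp add: card_PiE)

lemma card_edge_constant_supermodular: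
  assumes "finite V" "finite E" "\<forall>e\<in>E. p e \<in> V \<and> q e \<in> V" "finite Q" "Q \<noteq> {}" "A \<subseteq> E" "B \<subseteq> E"
  shows "real (card (edge_constant V Q A p q)) * card (edge_constant V Q B p q)
       \<le> real (card (edge_constant V Q (A \<union> B) p q)) * card (edge_constant V Q (A \<inter> B) p q)"
proof -
  have card_eq: "card (edge_constant V Q W p q) = card Q ^ card (clusters V W p q)" if "W \<subseteq> E" for W
    using assms(3) that by (intro card_edge_constant[OF assms(1)]) auto
  have "card (clusters V A p q) + card (clusters V B p q)
      \<le> card (clusters V (A \<union> B) p q) + card (clusters V (A \<inter> B) p q)"
    using assms(2,3,7) finite_subset by (intro card_clusters_supermodular[OF assms(1)]) auto
  moreover have "1 \<le> real (card Q)" using assms(4,5) by (simp add: Suc_leI card_gt_0_iff)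
  ultimately have "real (card Q) ^ (card (clusters V A p q) + card (clusters V B p q))
      \<le> real (card Q) ^ (card (clusters V (A \<union> B) p q) + card (clusters V (A \<inter> B) p q))"
    by (rule power_increasing)
  then show ?thesis
    using assms(6,7) by (simp add: card_eq Int_absorb2 le_supI2 le_infI1 power_add)
qed

lemma sum_edge_constant_monomial:
  fixes V :: "'v set" and Q :: "'a::comm_semiring_1 set" and k :: nat
  assumes "finite V" "finite Q" "\<forall>e\<in>W. p e \<in> V \<and> q e \<in> V" "\<forall>i<k. v i \<in> V"
  shows "(\<Sum>\<sigma>\<in>edge_constant V Q W p q. \<Prod>i<k. \<sigma> (v i) ^ m i)
     = (\<Prod>C\<in>clusters V W p q. \<Sum>x\<in>Q. x ^ (\<Sum>i | i < k \<and> cluster W p q (v i) = C. m i))"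
proof -
  let ?cl = "clusters V W p q"
  have "(\<Sum>\<sigma>\<in>edge_constant V Q W p q. \<Prod>i<k. \<sigma> (v i) ^ m i)
      = (\<Sum>\<tau>\<in>?cl \<rightarrow>\<^sub>E Q. \<Prod>i<k. (\<lambda>u\<in>V. \<tau> (cluster W p q u)) (v i) ^ m i)"
    by (rule sum.reindex_bij_betw[OF bij_betw_clusters_edge_constant[OF assms(3)], symmetric])
  also have "\<dots> = (\<Sum>\<tau>\<in>?cl \<rightarrow>\<^sub>E Q. \<Prod>i<k. \<tau> (cluster W p q (v i)) ^ m i)"
    using assms(4) by (intro sum.cong prod.cong refl) auto
  also have "\<dots> = (\<Sum>\<tau>\<in>?cl \<rightarrow>\<^sub>E Q. \<Prod>C\<in>?cl. \<tau> C ^ (\<Sum>i | i < k \<and> cluster W p q (v i) = C. m i))"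
  proof (rule sum.cong[OF refl])
    fix \<tau> :: "'v set \<Rightarrow> 'a"
    have "(\<Prod>i<k. \<tau> (cluster W p q (v i)) ^ m i)
        = (\<Prod>C\<in>?cl. \<Prod>i | i \<in> {..<k} \<and> cluster W p q (v i) = C. \<tau> (cluster W p q (v i)) ^ m i)"
      by (rule prod.group[symmetric]) (use assms in \<open>auto simp: clusters_def\<close>)
    also have "\<dots> = (\<Prod>C\<in>?cl. \<tau> C ^ (\<Sum>i | i < k \<and> cluster W p q (v i) = C. m i))"
      by (rule prod.cong[OF refl]) (simp add: power_sum)
    finally show "(\<Prod>i<k. \<tau> (cluster W p q (v i)) ^ m i) = \<dots>" .
  qed
  also have "\<dots> = (\<Prod>C\<in>?cl. \<Sum>x\<in>Q. x ^ (\<Sum>i | i < k \<and> cluster W p q (v i) = C. m i))"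
    by (rule prod_sum_PiE[symmetric]) (use assms finite_clusters in auto)
  finally show ?thesis .
qed

section \<open>Moments of a symmetric spin set\<close>

definition moment :: "real set \<Rightarrow> nat \<Rightarrow> real" where
  "moment Q n = (\<Sum>x\<in>Q. x ^ n) / card Q"

lemma sum_power_odd_eq_0:
  fixes Q :: "real set"
  assumes "uminus ` Q = Q" "odd n"
  shows "(\<Sum>x\<in>Q. x ^ n) = 0"
proof -
  have "(\<Sum>x\<in>Q. x ^ n) = (\<Sum>x\<in>uminus ` Q. x ^ n)" using assms(1) by simp
  also have "\<dots> = - (\<Sum>x\<in>Q. x ^ n)"
    using assms(2) by (simp add: sum.reindex sum_negf)
  finally show ?thesis by simp
qed

lemma sum_power_nonneg:
  fixes Q :: "real set"
  assumes "uminus ` Q = Q"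
  shows "0 \<le> (\<Sum>x\<in>Q. x ^ n)"
  using sum_power_odd_eq_0[OF assms] by (cases "even n") (auto intro: sum_nonneg simp: zero_le_even_power)

text \<open>Chebyshev's sum inequality: for even \<open>m, n\<close> the functions \<open>x\<^sup>m\<close> and \<open>x\<^sup>n\<close> are similarly
  ordered (both increase with \<open>\<bar>x\<bar>\<close>); for odd \<open>m\<close> or \<open>n\<close> the left-hand side vanishes by symmetry.\<close>
lemma sum_power_mult_le:
  fixes Q :: "real set"
  assumes "finite Q" "uminus ` Q = Q"
  shows "(\<Sum>x\<in>Q. x ^ m) * (\<Sum>x\<in>Q. x ^ n) \<le> card Q * (\<Sum>x\<in>Q. x ^ (m + n))"
proof (cases "even m \<and> even n")
  case True
  have similarly_ordered: "0 \<le> (x ^ m - y ^ m) * (x ^ n - y ^ n)" for x y :: real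
  proof -
    have "x ^ m = \<bar>x\<bar> ^ m" "y ^ m = \<bar>y\<bar> ^ m" "x ^ n = \<bar>x\<bar> ^ n" "y ^ n = \<bar>y\<bar> ^ n"
      using True by (simp_all add: power_even_abs)
    moreover have "(\<bar>x\<bar> ^ m \<le> \<bar>y\<bar> ^ m \<and> \<bar>x\<bar> ^ n \<le> \<bar>y\<bar> ^ n) \<or> (\<bar>y\<bar> ^ m \<le> \<bar>x\<bar> ^ m \<and> \<bar>y\<bar> ^ n \<le> \<bar>x\<bar> ^ n)"
      by (meson abs_ge_zero le_cases power_mono)
    ultimately show ?thesis by (auto intro: mult_nonpos_nonpos mult_nonneg_nonneg)
  qed
  have "0 \<le> (\<Sum>x\<in>Q. \<Sum>y\<in>Q. (x ^ m - y ^ m) * (x ^ n - y ^ n))"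
    by (intro sum_nonneg similarly_ordered)
  also have "\<dots> = (\<Sum>x\<in>Q. \<Sum>y\<in>Q. x ^ (m + n)) + (\<Sum>x\<in>Q. \<Sum>y\<in>Q. y ^ (m + n))
      - (\<Sum>x\<in>Q. \<Sum>y\<in>Q. x ^ m * y ^ n) - (\<Sum>x\<in>Q. \<Sum>y\<in>Q. y ^ m * x ^ n)"
    by (simp add: algebra_simps power_add sum_subtractf sum.distrib)
  also have "\<dots> = 2 * (card Q * (\<Sum>x\<in>Q. x ^ (m + n)) - (\<Sum>x\<in>Q. x ^ m) * (\<Sum>x\<in>Q. x ^ n))"
  proof -
    have "(\<Sum>x\<in>Q. \<Sum>y\<in>Q. x ^ (m + n)) = card Q * (\<Sum>x\<in>Q. x ^ (m + n))"
      by (simp add: sum_distrib_left[symmetric] mult.commute)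
    moreover have "(\<Sum>x\<in>Q. \<Sum>y\<in>Q. x ^ m * y ^ n) = (\<Sum>x\<in>Q. x ^ m) * (\<Sum>x\<in>Q. x ^ n)"
      by (simp add: sum_product)
    moreover have "(\<Sum>x\<in>Q. \<Sum>y\<in>Q. y ^ m * x ^ n) = (\<Sum>x\<in>Q. x ^ m) * (\<Sum>x\<in>Q. x ^ n)"
      by (simp add: sum_product sum.swap[of "\<lambda>x y. y ^ m * x ^ n"])
    ultimately show ?thesis by simp
  qed
  finally show ?thesis by simp
next
  case False
  then show ?thesis using sum_power_odd_eq_0[OF assms(2)] sum_power_nonneg[OF assms(2)] by auto
qed

lemma moment_nonneg: "uminus ` Q = Q \<Longrightarrow> 0 \<le> moment Q n"
  unfolding moment_def by (simp add: sum_power_nonneg)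

lemma moment_0: "finite Q \<Longrightarrow> Q \<noteq> {} \<Longrightarrow> moment Q 0 = 1"
  unfolding moment_def by simp

lemma moment_mult_le:
  assumes "finite Q" "uminus ` Q = Q"
  shows "moment Q m * moment Q n \<le> moment Q (m + n)"
proof (cases "Q = {}")
  case False
  then have pos: "0 < real (card Q)" using assms(1) by (simp add: card_gt_0_iff)
  have "moment Q m * moment Q n = ((\<Sum>x\<in>Q. x ^ m) * (\<Sum>x\<in>Q. x ^ n)) / (card Q * card Q)"
    unfolding moment_def by simp
  also have "\<dots> \<le> (card Q * (\<Sum>x\<in>Q. x ^ (m + n))) / (card Q * card Q)"
    by (rule divide_right_mono[OF sum_power_mult_le[OF assms]]) simp
  also have "\<dots> = moment Q (m + n)" using pos unfolding moment_def by simp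
  finally show ?thesis .
qed (simp add: moment_def)

lemma prod_moment_le:
  assumes "finite Q" "Q \<noteq> {}" "uminus ` Q = Q" "finite J"
  shows "(\<Prod>j\<in>J. moment Q (n j)) \<le> moment Q (\<Sum>j\<in>J. n j)"
  using assms(4)
proof (induction J rule: finite_induct)
  case (insert j J)
  then have "(\<Prod>j\<in>insert j J. moment Q (n j)) \<le> moment Q (n j) * moment Q (\<Sum>j\<in>J. n j)"
    by (simp add: mult_left_mono moment_nonneg assms(3))
  also have "\<dots> \<le> moment Q (\<Sum>j\<in>insert j J. n j)"
    using insert moment_mult_le[OF assms(1,3)] by simp
  finally show ?case .
qed (simp add: moment_0 assms)

text \<open>The mean of \<open>\<Prod>i<k. \<sigma> (v i) ^ m i\<close> over the uniform \<open>\<sigma> \<in> edge_constant V Q W p q\<close>: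
  \<open>\<sigma>\<close> carries one independent uniform spin per cluster.\<close>
definition cluster_moment ::
    "'v set \<Rightarrow> 'e set \<Rightarrow> ('e \<Rightarrow> 'v) \<Rightarrow> ('e \<Rightarrow> 'v) \<Rightarrow> real set \<Rightarrow> nat \<Rightarrow> (nat \<Rightarrow> 'v) \<Rightarrow> (nat \<Rightarrow> nat) \<Rightarrow> real"
  where "cluster_moment V W p q Q k v m =
    (\<Prod>C\<in>clusters V W p q. moment Q (\<Sum>i | i < k \<and> cluster W p q (v i) = C. m i))"

lemma cluster_moment_nonneg: "uminus ` Q = Q \<Longrightarrow> 0 \<le> cluster_moment V W p q Q k v m"
  unfolding cluster_moment_def by (simp add: prod_nonneg moment_nonneg)

lemma cluster_moment_zero: "finite Q \<Longrightarrow> Q \<noteq> {} \<Longrightarrow> cluster_moment V W p q Q k v (\<lambda>_. 0) = 1"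
  unfolding cluster_moment_def by (simp add: moment_0)

lemma cluster_moment_mult_le:
  assumes "finite Q" "uminus ` Q = Q"
  shows "cluster_moment V W p q Q k v r * cluster_moment V W p q Q k v s
       \<le> cluster_moment V W p q Q k v (\<lambda>i. r i + s i)"
  unfolding cluster_moment_def prod.distrib[symmetric] sum.distrib
  by (intro prod_mono conjI mult_nonneg_nonneg moment_nonneg moment_mult_le assms)

lemma sum_edge_constant_monomial_eq:
  fixes V :: "'v set" and k :: nat
  assumes "finite V" "finite Q" "Q \<noteq> {}" "\<forall>e\<in>W. p e \<in> V \<and> q e \<in> V" "\<forall>i<k. v i \<in> V"
  shows "(\<Sum>\<sigma>\<in>edge_constant V Q W p q. \<Prod>i<k. \<sigma> (v i) ^ m i)
     = card (edge_constant V Q W p q) * cluster_moment V W p q Q k v m"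
proof -
  have "real (card Q) \<noteq> 0" using assms(2,3) by simp
  then show ?thesis
    unfolding sum_edge_constant_monomial[OF assms(1,2,4,5)] card_edge_constant[OF assms(1,4)]
      cluster_moment_def moment_def
    by (simp add: prod.distrib prod_dividef)
qed

lemma Image_cluster_coarsening:
  assumes "W \<subseteq> W'"
  shows "(link_rel W' p q)\<^sup>* `` cluster W p q u = cluster W' p q u"
proof
  have "(link_rel W p q)\<^sup>* \<subseteq> (link_rel W' p q)\<^sup>*"
    using assms unfolding link_rel_def by (intro rtrancl_mono) blast
  then show "(link_rel W' p q)\<^sup>* `` cluster W p q u \<subseteq> cluster W' p q u"
    unfolding cluster_def by (auto dest: rtrancl_trans)
  show "cluster W' p q u \<subseteq> (link_rel W' p q)\<^sup>* `` cluster W p q u"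
    using cluster_self[of u W p q] unfolding cluster_def by auto
qed

text \<open>Coarsening the clusters multiplies moments together, which can only increase them.\<close>
lemma cluster_moment_mono:
  fixes V :: "'v set" and k :: nat
  assumes "finite V" "finite Q" "Q \<noteq> {}" "uminus ` Q = Q" "\<forall>i<k. v i \<in> V" "W \<subseteq> W'"
  shows "cluster_moment V W p q Q k v m \<le> cluster_moment V W' p q Q k v m"
proof -
  let ?coarsen = "\<lambda>C. (link_rel W' p q)\<^sup>* `` C"
  let ?mass = "\<lambda>W C. \<Sum>i | i < k \<and> cluster W p q (v i) = C. m i"
  let ?fibre = "\<lambda>C'. {C \<in> clusters V W p q. ?coarsen C = C'}"
  have fin: "finite (clusters V W p q)" "finite (clusters V W' p q)" using finite_clusters assms(1) by auto
  have "?coarsen ` clusters V W p q \<subseteq> clusters V W' p q"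
    unfolding clusters_def image_image Image_cluster_coarsening[OF assms(6)] by simp
  then have "cluster_moment V W p q Q k v m = (\<Prod>C'\<in>clusters V W' p q. \<Prod>C\<in>?fibre C'. moment Q (?mass W C))"
    unfolding cluster_moment_def by (rule prod.group[symmetric, OF fin])
  also have "\<dots> \<le> (\<Prod>C'\<in>clusters V W' p q. moment Q (\<Sum>C\<in>?fibre C'. ?mass W C))"
    using fin by (intro prod_mono conjI prod_nonneg moment_nonneg prod_moment_le assms) auto
  also have "\<dots> = cluster_moment V W' p q Q k v m"
    unfolding cluster_moment_def
  proof (intro prod.cong refl arg_cong[where f = "moment Q"])
    fix C' assume "C' \<in> clusters V W' p q"
    have "(\<Sum>C\<in>?fibre C'. \<Sum>i | i \<in> {i. i < k \<and> cluster W' p q (v i) = C'} \<and> cluster W p q (v i) = C. m i)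
        = ?mass W' C'"
    proof (rule sum.group)
      show "(\<lambda>i. cluster W p q (v i)) ` {i. i < k \<and> cluster W' p q (v i) = C'} \<subseteq> ?fibre C'"
        using assms(5) unfolding clusters_def by (simp add: image_subset_iff Image_cluster_coarsening[OF assms(6)])
    qed (use fin in auto)
    moreover have "{i. i \<in> {i. i < k \<and> cluster W' p q (v i) = C'} \<and> cluster W p q (v i) = C}
        = {i. i < k \<and> cluster W p q (v i) = C}" if "C \<in> ?fibre C'" for C
    proof -
      have "cluster W' p q (v i) = C'" if "cluster W p q (v i) = C" for i
        using \<open>C \<in> ?fibre C'\<close> that Image_cluster_coarsening[OF assms(6), of p q "v i", symmetric] by simp
      then show ?thesis by auto
    qed
    ultimately show "(\<Sum>C\<in>?fibre C'. ?mass W C) = ?mass W' C'" by simp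
  qed
  finally show ?thesis .
qed

section \<open>A joint random-cluster representation\<close>

text \<open>The weight of an edge, given whether the primal spins (\<open>A\<close>) and the dual spins (\<open>B\<close>) across
  it agree.\<close>
definition edge_factor :: "real \<Rightarrow> real \<Rightarrow> bool \<Rightarrow> bool \<Rightarrow> real" where
  "edge_factor a b A B = of_bool (A \<or> B) * (if B then 1 else a) * (if A then 1 else b)"

lemma edge_factor_split:
  "edge_factor a b A B = of_bool A * a + of_bool (A \<and> B) * (1 - a - b) + of_bool B * b"
  by (simp add: edge_factor_def)

text \<open>A set \<open>S \<subseteq> E <+> E\<close> encodes the pair \<open>Inr -` S \<subseteq> Inl -` S\<close> of edge sets of the joint
  random-cluster representation: across the edges of \<open>Inl -` S\<close> the primal spins are forced to agree,
  across those outside \<open>Inr -` S\<close> the dual spins.\<close>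
definition fk_weight :: "'e set \<Rightarrow> real \<Rightarrow> real \<Rightarrow> ('e + 'e) set \<Rightarrow> real" where
  "fk_weight E a b S = of_bool (Inr -` S \<subseteq> Inl -` S) *
     (a ^ card (Inr -` S) * (1 - a - b) ^ card (Inl -` S - Inr -` S) * b ^ card (E - Inl -` S))"

lemma fk_weight_nonneg: "0 \<le> a \<Longrightarrow> 0 \<le> b \<Longrightarrow> a + b \<le> 1 \<Longrightarrow> 0 \<le> fk_weight E a b S"
  unfolding fk_weight_def by simp

lemma prod_of_bool_mult:
  fixes f :: "'e \<Rightarrow> 'a::comm_semiring_1"
  assumes "finite S"
  shows "(\<Prod>e\<in>S. of_bool (P e) * f e) = of_bool (\<forall>e\<in>S. P e) * prod f S"
  using assms by (induction S rule: finite_induct) auto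

lemma vimage_Inl_Plus [simp]: "Inl -` (A <+> B) = A"
  and vimage_Inr_Plus [simp]: "Inr -` (A <+> B) = B"
  by auto

lemma sum_Pow_Pow_eq_sum_Pow_Plus:
  "(\<Sum>\<omega>\<in>Pow E. \<Sum>\<zeta>\<in>Pow \<omega>. h \<omega> \<zeta>) = (\<Sum>S\<in>Pow (E <+> E). if Inr -` S \<subseteq> Inl -` S then h (Inl -` S) (Inr -` S) else 0)"
proof (cases "finite E")
  case True
  have "(\<Sum>\<omega>\<in>Pow E. \<Sum>\<zeta>\<in>Pow \<omega>. h \<omega> \<zeta>) = (\<Sum>\<omega>\<in>Pow E. \<Sum>\<zeta>\<in>Pow E. if \<zeta> \<subseteq> \<omega> then h \<omega> \<zeta> else 0)"
  proof (rule sum.cong[OF refl])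
    fix \<omega> assume "\<omega> \<in> Pow E"
    then show "(\<Sum>\<zeta>\<in>Pow \<omega>. h \<omega> \<zeta>) = (\<Sum>\<zeta>\<in>Pow E. if \<zeta> \<subseteq> \<omega> then h \<omega> \<zeta> else 0)"
      using sum.inter_restrict[of "Pow E" "h \<omega>" "Pow \<omega>"] True by (simp add: Int_absorb1 Pow_mono)
  qed
  also have "\<dots> = (\<Sum>(\<omega>, \<zeta>)\<in>Pow E \<times> Pow E. if \<zeta> \<subseteq> \<omega> then h \<omega> \<zeta> else 0)"
    by (rule sum.cartesian_product)
  also have "\<dots> = (\<Sum>S\<in>Pow (E <+> E). if Inr -` S \<subseteq> Inl -` S then h (Inl -` S) (Inr -` S) else 0)"
    by (rule sum.reindex_bij_witness[where j = "\<lambda>(\<omega>, \<zeta>). \<omega> <+> \<zeta>" and i = "\<lambda>S. (Inl -` S, Inr -` S)"])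
      (auto elim: sumE split: if_splits)
  finally show ?thesis .
qed simp

lemma prod_edge_factor_expand:
  assumes "finite E"
  shows "(\<Prod>e\<in>E. edge_factor a b (A e) (B e))
    = (\<Sum>S\<in>Pow (E <+> E). fk_weight E a b S * of_bool (\<forall>e\<in>Inl -` S. A e) * of_bool (\<forall>e\<in>E - Inr -` S. B e))"
proof -
  let ?c = "1 - a - b"
  have "(\<Prod>e\<in>E. edge_factor a b (A e) (B e))
      = (\<Prod>e\<in>E. (of_bool (A e) * a + of_bool (A e \<and> B e) * ?c) + of_bool (B e) * b)"
    by (simp add: edge_factor_split)
  also have "\<dots> = (\<Sum>\<omega>\<in>Pow E. \<Sum>\<zeta>\<in>Pow \<omega>. ((\<Prod>e\<in>\<zeta>. of_bool (A e) * a) * (\<Prod>e\<in>\<omega> - \<zeta>. of_bool (A e \<and> B e) * ?c))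
      * (\<Prod>e\<in>E - \<omega>. of_bool (B e) * b))"
    using assms by (simp add: prod_add finite_subset sum_distrib_right)
  also have "\<dots> = (\<Sum>\<omega>\<in>Pow E. \<Sum>\<zeta>\<in>Pow \<omega>. a ^ card \<zeta> * ?c ^ card (\<omega> - \<zeta>) * b ^ card (E - \<omega>)
      * of_bool (\<forall>e\<in>\<omega>. A e) * of_bool (\<forall>e\<in>E - \<zeta>. B e))"
  proof (intro sum.cong refl)
    fix \<omega> \<zeta> assume "\<omega> \<in> Pow E" "\<zeta> \<in> Pow \<omega>"
    then have "(\<forall>e\<in>\<zeta>. A e) \<and> (\<forall>e\<in>\<omega> - \<zeta>. A e \<and> B e) \<and> (\<forall>e\<in>E - \<omega>. B e)
        \<longleftrightarrow> (\<forall>e\<in>\<omega>. A e) \<and> (\<forall>e\<in>E - \<zeta>. B e)" by blast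
    with \<open>\<omega> \<in> Pow E\<close> \<open>\<zeta> \<in> Pow \<omega>\<close> show "(\<Prod>e\<in>\<zeta>. of_bool (A e) * a) * (\<Prod>e\<in>\<omega> - \<zeta>. of_bool (A e \<and> B e) * ?c)
        * (\<Prod>e\<in>E - \<omega>. of_bool (B e) * b)
      = a ^ card \<zeta> * ?c ^ card (\<omega> - \<zeta>) * b ^ card (E - \<omega>) * of_bool (\<forall>e\<in>\<omega>. A e) * of_bool (\<forall>e\<in>E - \<zeta>. B e)"
      using assms by (auto simp: prod_of_bool_mult finite_subset)
  qed
  also have "\<dots> = (\<Sum>S\<in>Pow (E <+> E). fk_weight E a b S * of_bool (\<forall>e\<in>Inl -` S. A e) * of_bool (\<forall>e\<in>E - Inr -` S. B e))"
    unfolding sum_Pow_Pow_eq_sum_Pow_Plus fk_weight_def by (intro sum.cong refl) simp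
  finally show ?thesis .
qed

lemma card_Diff_modular:
  assumes "finite A" "finite A'" "B \<subseteq> A" "B' \<subseteq> A'"
  shows "card (A - B) + card (A' - B') = card (A \<union> A' - (B \<union> B')) + card (A \<inter> A' - B \<inter> B')"
proof -
  have fin: "finite B" "finite B'" using assms finite_subset by auto
  have split: "card (X - Y) + card Y = card X" if "finite X" "Y \<subseteq> X" for X Y :: "'a set"
    using that by (metis card_Diff_subset card_mono finite_subset le_add_diff_inverse2)
  have "card (A - B) + card B = card A" "card (A' - B') + card B' = card A'"
    "card (A \<union> A' - (B \<union> B')) + card (B \<union> B') = card (A \<union> A')"
    "card (A \<inter> A' - B \<inter> B') + card (B \<inter> B') = card (A \<inter> A')"
    using assms by (auto intro!: split)
  then show ?thesis
    using assms fin card_Un_Int[of A A'] card_Un_Int[of B B'] by linarith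
qed

lemma fk_weight_log_supermodular:
  assumes "finite E" "S \<subseteq> E <+> E" "T \<subseteq> E <+> E" "0 \<le> a" "0 \<le> b" "a + b \<le> 1"
  shows "fk_weight E a b S * fk_weight E a b T \<le> fk_weight E a b (S \<union> T) * fk_weight E a b (S \<inter> T)"
proof (cases "Inr -` S \<subseteq> Inl -` S \<and> Inr -` T \<subseteq> Inl -` T")
  case True
  let ?\<omega> = "Inl -` S" and ?\<zeta> = "Inr -` S" and ?\<omega>' = "Inl -` T" and ?\<zeta>' = "Inr -` T"
  have sub: "?\<omega> \<subseteq> E" "?\<omega>' \<subseteq> E" "?\<zeta> \<subseteq> E" "?\<zeta>' \<subseteq> E" using assms(2,3) by auto
  have fin: "finite ?\<omega>" "finite ?\<omega>'" "finite ?\<zeta>" "finite ?\<zeta>'"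
    using finite_subset[OF sub(1) assms(1)] finite_subset[OF sub(2) assms(1)]
      finite_subset[OF sub(3) assms(1)] finite_subset[OF sub(4) assms(1)] .
  let ?w = "\<lambda>x y z. a ^ x * (1 - a - b) ^ y * b ^ z"
  have weight_eq: "fk_weight E a b X = ?w (card (Inr -` X)) (card (Inl -` X - Inr -` X)) (card (E - Inl -` X))"
    if "Inr -` X \<subseteq> Inl -` X" for X
    using that unfolding fk_weight_def by simp
  have w_mult: "?w x y z * ?w x' y' z' = ?w (x + x') (y + y') (z + z')" for x y z x' y' z'
    by (simp add: power_add mult_ac)
  have "card ?\<zeta> + card ?\<zeta>' = card (?\<zeta> \<union> ?\<zeta>') + card (?\<zeta> \<inter> ?\<zeta>')"
    by (rule card_Un_Int[OF fin(3,4)])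
  moreover have "card (?\<omega> - ?\<zeta>) + card (?\<omega>' - ?\<zeta>') = card (?\<omega> \<union> ?\<omega>' - (?\<zeta> \<union> ?\<zeta>')) + card (?\<omega> \<inter> ?\<omega>' - ?\<zeta> \<inter> ?\<zeta>')"
    using fin True by (intro card_Diff_modular) auto
  moreover have "card (E - ?\<omega>) + card (E - ?\<omega>') = card (E - (?\<omega> \<union> ?\<omega>')) + card (E - ?\<omega> \<inter> ?\<omega>')"
    using card_Diff_modular[OF assms(1,1) sub(1,2)] by simp
  moreover have "Inr -` (S \<union> T) \<subseteq> Inl -` (S \<union> T)" "Inr -` (S \<inter> T) \<subseteq> Inl -` (S \<inter> T)"
    using True by auto
  ultimately show ?thesis
    using True by (simp only: weight_eq w_mult vimage_Un vimage_Int)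
next
  case False
  then have "fk_weight E a b S * fk_weight E a b T = 0" unfolding fk_weight_def by auto
  moreover have "0 \<le> fk_weight E a b (S \<union> T) * fk_weight E a b (S \<inter> T)"
    using assms(4-6) by (simp add: fk_weight_nonneg)
  ultimately show ?thesis by auto
qed

section \<open>Two spin systems coupled through a common edge set\<close>

lemma sum_sum_mult_separate:
  fixes c :: "'a::comm_semiring_0"
  shows "(\<Sum>x\<in>A. \<Sum>y\<in>B. c * f x * g y) = c * sum f A * sum g B"
proof -
  have "c * sum f A * sum g B = c * (\<Sum>x\<in>A. \<Sum>y\<in>B. f x * g y)"
    by (simp add: sum_product mult.assoc)
  then show ?thesis by (simp add: sum_distrib_left mult.assoc)
qed

text \<open>No duality between the two graphs is needed.\<close>
locale coupled_spin_model =
  fixes V :: "'v set" and U :: "'u set" and E :: "'e set"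
    and x1 x2 :: "'e \<Rightarrow> 'v" and y1 y2 :: "'e \<Rightarrow> 'u"
    and Q :: "real set" and Q' :: "'s set" and a b :: real
  assumes finite_V: "finite V" and finite_U: "finite U" and finite_E: "finite E"
    and primal_ends: "\<forall>e\<in>E. x1 e \<in> V \<and> x2 e \<in> V"
    and dual_ends: "\<forall>e\<in>E. y1 e \<in> U \<and> y2 e \<in> U"
    and finite_Q: "finite Q" and Q_nonempty: "Q \<noteq> {}" and Q_symmetric: "uminus ` Q = Q"
    and finite_Q': "finite Q'" and Q'_nonempty: "Q' \<noteq> {}"
    and a_nonneg: "0 \<le> a" and b_nonneg: "0 \<le> b" and a_plus_b_le_1: "a + b \<le> 1"
begin

definition gibbs_sum :: "(('v \<Rightarrow> real) \<Rightarrow> real) \<Rightarrow> real" where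
  "gibbs_sum f = (\<Sum>\<sigma>\<in>V \<rightarrow>\<^sub>E Q. \<Sum>\<sigma>'\<in>U \<rightarrow>\<^sub>E Q'.
     (\<Prod>e\<in>E. edge_factor a b (\<sigma> (x1 e) = \<sigma> (x2 e)) (\<sigma>' (y1 e) = \<sigma>' (y2 e))) * f \<sigma>)"

definition fk_measure :: "('e + 'e) set \<Rightarrow> real" where
  "fk_measure S = fk_weight E a b S * card (edge_constant V Q (Inl -` S) x1 x2)
     * card (edge_constant U Q' (E - Inr -` S) y1 y2)"

lemma gibbs_sum_fk:
  "gibbs_sum f = (\<Sum>S\<in>Pow (E <+> E). fk_weight E a b S * (\<Sum>\<sigma>\<in>edge_constant V Q (Inl -` S) x1 x2. f \<sigma>)
     * card (edge_constant U Q' (E - Inr -` S) y1 y2))"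
proof -
  let ?A = "\<lambda>S \<sigma>. \<forall>e\<in>Inl -` S. \<sigma> (x1 e) = \<sigma> (x2 e)"
  let ?B = "\<lambda>S \<sigma>'. \<forall>e\<in>E - Inr -` S. \<sigma>' (y1 e) = \<sigma>' (y2 e)"
  have fin: "finite (V \<rightarrow>\<^sub>E Q)" "finite (U \<rightarrow>\<^sub>E Q')"
    using finite_V finite_U finite_Q finite_Q' by (simp_all add: finite_PiE)
  have "gibbs_sum f = (\<Sum>\<sigma>\<in>V \<rightarrow>\<^sub>E Q. \<Sum>\<sigma>'\<in>U \<rightarrow>\<^sub>E Q'. \<Sum>S\<in>Pow (E <+> E).
      fk_weight E a b S * (f \<sigma> * of_bool (?A S \<sigma>)) * of_bool (?B S \<sigma>'))"
    unfolding gibbs_sum_def prod_edge_factor_expand[OF finite_E] sum_distrib_right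
    by (simp add: mult_ac)
  also have "\<dots> = (\<Sum>\<sigma>\<in>V \<rightarrow>\<^sub>E Q. \<Sum>S\<in>Pow (E <+> E). \<Sum>\<sigma>'\<in>U \<rightarrow>\<^sub>E Q'.
      fk_weight E a b S * (f \<sigma> * of_bool (?A S \<sigma>)) * of_bool (?B S \<sigma>'))"
    by (rule sum.cong[OF refl], rule sum.swap)
  also have "\<dots> = (\<Sum>S\<in>Pow (E <+> E). fk_weight E a b S * (\<Sum>\<sigma>\<in>V \<rightarrow>\<^sub>E Q. f \<sigma> * of_bool (?A S \<sigma>))
      * (\<Sum>\<sigma>'\<in>U \<rightarrow>\<^sub>E Q'. of_bool (?B S \<sigma>')))"
    by (subst sum.swap) (simp only: sum_sum_mult_separate)
  also have "\<dots> = (\<Sum>S\<in>Pow (E <+> E). fk_weight E a b S * (\<Sum>\<sigma>\<in>edge_constant V Q (Inl -` S) x1 x2. f \<sigma>)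
      * card (edge_constant U Q' (E - Inr -` S) y1 y2))"
  proof -
    have "(V \<rightarrow>\<^sub>E Q) \<inter> {\<sigma>. ?A S \<sigma>} = edge_constant V Q (Inl -` S) x1 x2"
      "(U \<rightarrow>\<^sub>E Q') \<inter> {\<sigma>'. ?B S \<sigma>'} = edge_constant U Q' (E - Inr -` S) y1 y2" for S
      unfolding edge_constant_def by auto
    then show ?thesis using fin by simp
  qed
  finally show ?thesis .
qed

lemma gibbs_sum_monomial:
  fixes k :: nat
  assumes "\<forall>i<k. v i \<in> V"
  shows "gibbs_sum (\<lambda>\<sigma>. \<Prod>i<k. \<sigma> (v i) ^ m i)
    = (\<Sum>S\<in>Pow (E <+> E). fk_measure S * cluster_moment V (Inl -` S) x1 x2 Q k v m)"
  unfolding gibbs_sum_fk fk_measure_def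
proof (intro sum.cong refl)
  fix S assume "S \<in> Pow (E <+> E)"
  then have "\<forall>e\<in>Inl -` S. x1 e \<in> V \<and> x2 e \<in> V" using primal_ends by auto
  then show "fk_weight E a b S * (\<Sum>\<sigma>\<in>edge_constant V Q (Inl -` S) x1 x2. \<Prod>i<k. \<sigma> (v i) ^ m i)
      * card (edge_constant U Q' (E - Inr -` S) y1 y2)
    = fk_weight E a b S * card (edge_constant V Q (Inl -` S) x1 x2) * card (edge_constant U Q' (E - Inr -` S) y1 y2)
      * cluster_moment V (Inl -` S) x1 x2 Q k v m"
    by (simp add: sum_edge_constant_monomial_eq finite_V finite_Q Q_nonempty assms mult_ac)
qed

lemma fk_measure_nonneg: "0 \<le> fk_measure S"
  unfolding fk_measure_def using a_nonneg b_nonneg a_plus_b_le_1 by (simp add: fk_weight_nonneg)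

lemma fk_measure_log_supermodular:
  assumes "S \<subseteq> E <+> E" "T \<subseteq> E <+> E"
  shows "fk_measure S * fk_measure T \<le> fk_measure (S \<union> T) * fk_measure (S \<inter> T)"
proof -
  let ?w = "fk_weight E a b"
  let ?N = "\<lambda>S. real (card (edge_constant V Q (Inl -` S) x1 x2))"
  let ?N' = "\<lambda>S. real (card (edge_constant U Q' (E - Inr -` S) y1 y2))"
  have "?w S * ?w T \<le> ?w (S \<union> T) * ?w (S \<inter> T)"
    using fk_weight_log_supermodular[OF finite_E assms a_nonneg b_nonneg a_plus_b_le_1] .
  moreover have "?N S * ?N T \<le> ?N (S \<union> T) * ?N (S \<inter> T)"
    using card_edge_constant_supermodular[OF finite_V finite_E primal_ends finite_Q Q_nonempty,
        of "Inl -` S" "Inl -` T"] assms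
    by (auto simp: vimage_Un vimage_Int)
  moreover have "?N' S * ?N' T \<le> ?N' (S \<union> T) * ?N' (S \<inter> T)"
  proof -
    have "E - Inr -` (S \<inter> T) = (E - Inr -` S) \<union> (E - Inr -` T)"
      "E - Inr -` (S \<union> T) = (E - Inr -` S) \<inter> (E - Inr -` T)" by auto
    then show ?thesis
      using card_edge_constant_supermodular[OF finite_U finite_E dual_ends finite_Q' Q'_nonempty,
          of "E - Inr -` S" "E - Inr -` T"]
      by (simp add: mult.commute)
  qed
  moreover have "0 \<le> ?w S * ?w T" "0 \<le> ?N S * ?N T" "0 \<le> ?N' S * ?N' T"
    using a_nonneg b_nonneg a_plus_b_le_1 by (simp_all add: fk_weight_nonneg)
  ultimately have "(?w S * ?w T) * (?N S * ?N T) * (?N' S * ?N' T)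
      \<le> (?w (S \<union> T) * ?w (S \<inter> T)) * (?N (S \<union> T) * ?N (S \<inter> T)) * (?N' (S \<union> T) * ?N' (S \<inter> T))"
    by (meson mult_mono order_trans mult_nonneg_nonneg)
  then show ?thesis unfolding fk_measure_def by (simp add: mult_ac)
qed

lemma gibbs_sum_one_pos: "0 < gibbs_sum (\<lambda>_. 1)"
proof -
  obtain q0 q0' where q0: "q0 \<in> Q" "q0' \<in> Q'" using Q_nonempty Q'_nonempty by blast
  let ?w = "\<lambda>\<sigma> \<sigma>'. \<Prod>e\<in>E. edge_factor a b (\<sigma> (x1 e) = \<sigma> (x2 e)) (\<sigma>' (y1 e) = \<sigma>' (y2 e))"
  have fin: "finite (V \<rightarrow>\<^sub>E Q)" "finite (U \<rightarrow>\<^sub>E Q')"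
    using finite_V finite_U finite_Q finite_Q' by (simp_all add: finite_PiE)
  have w_nonneg: "0 \<le> ?w \<sigma> \<sigma>'" for \<sigma> \<sigma>'
    using a_nonneg b_nonneg by (intro prod_nonneg) (simp add: edge_factor_def)
  have "?w (\<lambda>u\<in>V. q0) (\<lambda>u\<in>U. q0') = 1"
    using primal_ends dual_ends by (simp add: edge_factor_def)
  moreover have "?w (\<lambda>u\<in>V. q0) (\<lambda>u\<in>U. q0') \<le> (\<Sum>\<sigma>'\<in>U \<rightarrow>\<^sub>E Q'. ?w (\<lambda>u\<in>V. q0) \<sigma>')"
    using q0 fin w_nonneg by (intro member_le_sum) auto
  moreover have "\<dots> \<le> gibbs_sum (\<lambda>_. 1)"
    unfolding gibbs_sum_def mult_1_right using q0 fin w_nonneg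
    by (intro member_le_sum[of "\<lambda>u\<in>V. q0"] sum_nonneg) auto
  ultimately show ?thesis by simp
qed

theorem gibbs_sum_monomial_correlation:
  fixes k :: nat
  assumes "\<forall>i<k. v i \<in> V"
  shows "gibbs_sum (\<lambda>\<sigma>. \<Prod>i<k. \<sigma> (v i) ^ r i) * gibbs_sum (\<lambda>\<sigma>. \<Prod>i<k. \<sigma> (v i) ^ s i)
       \<le> gibbs_sum (\<lambda>\<sigma>. \<Prod>i<k. \<sigma> (v i) ^ (r i + s i)) * gibbs_sum (\<lambda>_. 1)"
proof -
  let ?G = "\<lambda>m S. cluster_moment V (Inl -` S) x1 x2 Q k v m"
  have one: "gibbs_sum (\<lambda>_. 1) = (\<Sum>S\<in>Pow (E <+> E). fk_measure S)"
    using gibbs_sum_monomial[OF assms, of "\<lambda>_. 0"] by (simp add: cluster_moment_zero finite_Q Q_nonempty)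
  have "(\<Sum>S\<in>Pow (E <+> E). fk_measure S * ?G r S) * (\<Sum>S\<in>Pow (E <+> E). fk_measure S * ?G s S)
      \<le> (\<Sum>S\<in>Pow (E <+> E). fk_measure S * (?G r S * ?G s S)) * (\<Sum>S\<in>Pow (E <+> E). fk_measure S)"
  proof (rule fkg_inequality)
    have "?G m S \<le> ?G m T" if "S \<subseteq> T" for m S T
      using that by (intro cluster_moment_mono finite_V finite_Q Q_nonempty Q_symmetric assms) auto
    then show "?G r S \<le> ?G r T" "?G s S \<le> ?G s T" if "S \<subseteq> T" for S T
      using that by blast+
  qed (simp_all add: finite_E fk_measure_log_supermodular fk_measure_nonneg cluster_moment_nonneg Q_symmetric)
  also have "\<dots> \<le> (\<Sum>S\<in>Pow (E <+> E). fk_measure S * ?G (\<lambda>i. r i + s i) S) * (\<Sum>S\<in>Pow (E <+> E). fk_measure S)"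
    by (intro mult_right_mono sum_mono mult_left_mono sum_nonneg fk_measure_nonneg
        cluster_moment_mult_le finite_Q Q_symmetric)
  finally show ?thesis unfolding gibbs_sum_monomial[OF assms] one .
qed

end

section \<open>Combinatorial maps\<close>

text \<open>Choosing one of the two darts of each edge orients it, and so fixes its endpoints.\<close>
definition edge_dart :: "'d set \<Rightarrow> ('d \<Rightarrow> 'd) \<Rightarrow> 'd set \<Rightarrow> 'd" where
  "edge_dart D alpha e = (SOME d. d \<in> D \<and> e = {d, alpha d})"

lemma edge_dart:
  assumes "e \<in> edges D alpha"
  shows "edge_dart D alpha e \<in> D" "e = {edge_dart D alpha e, alpha (edge_dart D alpha e)}"
proof -
  have "\<exists>d. d \<in> D \<and> e = {d, alpha d}" using assms unfolding edges_def by auto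
  from someI_ex[OF this] show "edge_dart D alpha e \<in> D" "e = {edge_dart D alpha e, alpha (edge_dart D alpha e)}"
    unfolding edge_dart_def by auto
qed

lemma edge_separates_iff:
  assumes "\<forall>d\<in>D. alpha (alpha d) = d" "e \<in> edges D alpha"
  shows "(\<exists>d\<in>D. e = {d, alpha d} \<and> g d \<noteq> g (alpha d))
     \<longleftrightarrow> g (edge_dart D alpha e) \<noteq> g (alpha (edge_dart D alpha e))"
proof
  let ?d = "edge_dart D alpha e"
  assume "\<exists>d\<in>D. e = {d, alpha d} \<and> g d \<noteq> g (alpha d)"
  then obtain d where "e = {d, alpha d}" "g d \<noteq> g (alpha d)" by blast
  moreover have "alpha (alpha ?d) = ?d" using assms edge_dart(1) by blast
  ultimately show "g ?d \<noteq> g (alpha ?d)"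
    using edge_dart(2)[OF assms(2)] by (auto simp: doubleton_eq_iff)
qed (use edge_dart[OF assms(2)] in blast)

locale comb_map_spin_model =
  fixes D :: "'d set" and alpha rho :: "'d \<Rightarrow> 'd"
    and Q :: "real set" and Q' :: "complex set" and a b :: real
  assumes comb_map: "comb_map D alpha rho"
    and finite_Q: "finite Q" and Q_nonempty: "Q \<noteq> {}" and Q_symmetric: "uminus ` Q = Q"
    and finite_Q': "finite Q'" and Q'_nonempty: "Q' \<noteq> {}"
    and a_nonneg: "0 \<le> a" and b_nonneg: "0 \<le> b" and a_plus_b_le_1: "a + b \<le> 1"
begin

abbreviation "vtx1 e \<equiv> vtx rho (edge_dart D alpha e)"
abbreviation "vtx2 e \<equiv> vtx rho (alpha (edge_dart D alpha e))"
abbreviation "fce1 e \<equiv> fce alpha rho (edge_dart D alpha e)"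
abbreviation "fce2 e \<equiv> fce alpha rho (alpha (edge_dart D alpha e))"

lemma alpha_in_D: "d \<in> D \<Longrightarrow> alpha d \<in> D"
  using comb_map unfolding comb_map_def by (auto simp: permutes_in_image)

lemma alpha_involution: "\<forall>d\<in>D. alpha (alpha d) = d"
  using comb_map unfolding comb_map_def by auto

sublocale coupled_spin_model "verts D rho" "faces D alpha rho" "edges D alpha" vtx1 vtx2 fce1 fce2 Q Q' a b
proof unfold_locales
  have "finite D" using comb_map unfolding comb_map_def by simp
  then show "finite (verts D rho)" "finite (faces D alpha rho)" "finite (edges D alpha)"
    unfolding verts_def faces_def edges_def by simp_all
  show "\<forall>e\<in>edges D alpha. vtx1 e \<in> verts D rho \<and> vtx2 e \<in> verts D rho"
    "\<forall>e\<in>edges D alpha. fce1 e \<in> faces D alpha rho \<and> fce2 e \<in> faces D alpha rho"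
    unfolding verts_def faces_def using edge_dart(1) alpha_in_D by auto
qed (use finite_Q Q_nonempty Q_symmetric finite_Q' Q'_nonempty a_nonneg b_nonneg a_plus_b_le_1 in auto)

lemma eta_primal_eq: "eta_primal D alpha rho \<sigma> = {e \<in> edges D alpha. \<sigma> (vtx1 e) \<noteq> \<sigma> (vtx2 e)}"
  unfolding eta_primal_def using edge_separates_iff[OF alpha_involution, where g = "\<lambda>d. \<sigma> (vtx rho d)"]
  by auto

lemma eta_dual_eq: "eta_dual D alpha rho \<sigma>' = {e \<in> edges D alpha. \<sigma>' (fce1 e) \<noteq> \<sigma>' (fce2 e)}"
  unfolding eta_dual_def using edge_separates_iff[OF alpha_involution, where g = "\<lambda>d. \<sigma>' (fce alpha rho d)"]
  by auto

lemma prod_edge_factor_eq_weight: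
  assumes "\<sigma> \<in> verts D rho \<rightarrow>\<^sub>E Q" "\<sigma>' \<in> faces D alpha rho \<rightarrow>\<^sub>E Q'"
  shows "(\<Prod>e\<in>edges D alpha. edge_factor a b (\<sigma> (vtx1 e) = \<sigma> (vtx2 e)) (\<sigma>' (fce1 e) = \<sigma>' (fce2 e)))
    = (if (\<sigma>, \<sigma>') \<in> configs D alpha rho Q Q' then weight D alpha rho a b (\<sigma>, \<sigma>') else 0)"
proof -
  let ?A = "\<lambda>e. \<sigma> (vtx1 e) = \<sigma> (vtx2 e)" and ?B = "\<lambda>e. \<sigma>' (fce1 e) = \<sigma>' (fce2 e)"
  have "(\<Prod>e\<in>edges D alpha. edge_factor a b (?A e) (?B e))
      = of_bool (\<forall>e\<in>edges D alpha. ?A e \<or> ?B e)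
        * (\<Prod>e\<in>edges D alpha. (if ?B e then 1 else a) * (if ?A e then 1 else b))"
    unfolding edge_factor_def mult.assoc by (rule prod_of_bool_mult[OF finite_E])
  also have "\<dots> = of_bool (\<forall>e\<in>edges D alpha. ?A e \<or> ?B e)
        * (a ^ card {e \<in> edges D alpha. \<not> ?B e} * b ^ card {e \<in> edges D alpha. \<not> ?A e})"
    using finite_E by (simp add: prod.distrib prod.If_cases Int_def)
  finally show ?thesis
    using assms unfolding configs_def weight_def eta_primal_eq eta_dual_eq by auto
qed

lemma sum_configs_weight:
  "(\<Sum>c\<in>configs D alpha rho Q Q'. weight D alpha rho a b c * f (fst c)) = gibbs_sum f"
proof -
  let ?P = "(verts D rho \<rightarrow>\<^sub>E Q) \<times> (faces D alpha rho \<rightarrow>\<^sub>E Q')"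
  have "finite ?P"
    using finite_V finite_U finite_Q finite_Q' by (simp add: finite_PiE)
  moreover have "?P \<inter> configs D alpha rho Q Q' = configs D alpha rho Q Q'"
    unfolding configs_def by auto
  ultimately have "(\<Sum>c\<in>configs D alpha rho Q Q'. weight D alpha rho a b c * f (fst c))
      = (\<Sum>c\<in>?P. if c \<in> configs D alpha rho Q Q' then weight D alpha rho a b c * f (fst c) else 0)"
    using sum.inter_restrict[of ?P "\<lambda>c. weight D alpha rho a b c * f (fst c)" "configs D alpha rho Q Q'"]
    by simp
  also have "\<dots> = gibbs_sum f"
    unfolding gibbs_sum_def sum.cartesian_product
    by (intro sum.cong refl) (auto simp: prod_edge_factor_eq_weight)
  finally show ?thesis .
qed

lemma expect_eq_gibbs_sum_ratio:
  "expect D alpha rho Q Q' a b (\<lambda>(\<sigma>, \<sigma>'). f \<sigma>) = gibbs_sum f / gibbs_sum (\<lambda>_. 1)"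
  using sum_configs_weight[of f] sum_configs_weight[of "\<lambda>_. 1"]
  unfolding expect_def by (simp add: case_prod_beta)

end

theorem proposition5p2:
  fixes D :: "'d set" and alpha rho :: "'d \<Rightarrow> 'd"
    and Q :: "real set" and Q' :: "complex set" and a b :: real
    and k :: nat and v :: "nat \<Rightarrow> 'd set" and r s :: "nat \<Rightarrow> nat"
  assumes "comb_map D alpha rho"
    and "finite Q" and "Q \<noteq> {}" and "uminus ` Q = Q"
    and "finite Q'" and "Q' \<noteq> {}" and "uminus ` Q' = Q'"
    and "0 < a" and "a \<le> 1" and "0 < b" and "b \<le> 1" and "a + b \<le> 1"
    and "\<forall>i<k. v i \<in> verts D rho"
  shows "expect D alpha rho Q Q' a b (\<lambda>(\<sigma>, \<sigma>'). \<Prod>i<k. \<sigma> (v i) ^ (r i + s i))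
         \<ge> expect D alpha rho Q Q' a b (\<lambda>(\<sigma>, \<sigma>'). \<Prod>i<k. \<sigma> (v i) ^ r i)
           * expect D alpha rho Q Q' a b (\<lambda>(\<sigma>, \<sigma>'). \<Prod>i<k. \<sigma> (v i) ^ s i)"
proof -
  interpret comb_map_spin_model D alpha rho Q Q' a b
    using assms by unfold_locales auto
  let ?Z = "\<lambda>m. gibbs_sum (\<lambda>\<sigma>. \<Prod>i<k. \<sigma> (v i) ^ m i)"
  have "?Z r * ?Z s \<le> ?Z (\<lambda>i. r i + s i) * gibbs_sum (\<lambda>_. 1)"
    using gibbs_sum_monomial_correlation[OF assms(13)] .
  moreover have "0 < gibbs_sum (\<lambda>_. 1)" by (rule gibbs_sum_one_pos)
  ultimately show ?thesis
    unfolding expect_eq_gibbs_sum_ratio by (simp add: divide_simps)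
qed

end
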